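(* Let $n\geq2$. The group $hP\Sigma_n$ is generated by the automorphisms $\chi_{ij}$ ($1\leq i\neq j\leq n$), and its abelianization $hP\Sigma_n^{ab}$ is the free abelian group with basis the classes $\overline\chi_{ij}$.
   Context: $RF_n=\langle x_1,\dots,x_n\mid [x_i,w^{-1}x_iw]=1\ (w\in F_n)\rangle$ is the reduced free group, with $[a,b]=aba^{-1}b^{-1}$. $hP\Sigma_n$ is the subgroup of $\mathrm{Aut}(RF_n)$ of automorphisms sending each $x_i$ to a conjugate of $x_i$. $\chi_{ij}$ is the automorphism of $RF_n$ sending $x_i$ to $x_j^{-1}x_ix_j$ and fixing all $x_k$, $k\neq i$. *)

theory Defs
  imports "HOL-Algebra.Algebra" "HOL-Algebra.Free_Abelian_Groups"
begin

text \<open>A letter (i, True) stands for x_i, a letter (i, False) for x_i^{-1}.\<close>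

type_synonym letter = "nat \<times> bool"
type_synonym word = "letter list"

definition letter_inv :: "letter \<Rightarrow> letter" where
  "letter_inv a = (fst a, \<not> snd a)"

definition word_inv :: "word \<Rightarrow> word" where
  "word_inv w = rev (map letter_inv w)"

definition letters :: "nat \<Rightarrow> letter set" where
  "letters n = {1..n} \<times> UNIV"

definition words :: "nat \<Rightarrow> word set" where
  "words n = {w. set w \<subseteq> letters n}"

definition comm_word :: "word \<Rightarrow> word \<Rightarrow> word" where
  "comm_word a b = a @ b @ word_inv a @ word_inv b"

definition relator :: "nat \<Rightarrow> word \<Rightarrow> word" where
  "relator i w = comm_word [(i, True)] (word_inv w @ [(i, True)] @ w)"

inductive rf_eq :: "nat \<Rightarrow> word \<Rightarrow> word \<Rightarrow> bool" for n where
  rf_refl: "w \<in> words n \<Longrightarrow> rf_eq n w w"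
| rf_sym: "rf_eq n u v \<Longrightarrow> rf_eq n v u"
| rf_trans: "rf_eq n u v \<Longrightarrow> rf_eq n v w \<Longrightarrow> rf_eq n u w"
| rf_cancel: "u \<in> words n \<Longrightarrow> v \<in> words n \<Longrightarrow> a \<in> letters n \<Longrightarrow>
     rf_eq n (u @ [a, letter_inv a] @ v) (u @ v)"
| rf_rel: "u \<in> words n \<Longrightarrow> v \<in> words n \<Longrightarrow> i \<in> {1..n} \<Longrightarrow> w \<in> words n \<Longrightarrow>
     rf_eq n (u @ relator i w @ v) (u @ v)"

definition rf_class :: "nat \<Rightarrow> word \<Rightarrow> word set" where
  "rf_class n w = {v. rf_eq n w v}"

definition RF :: "nat \<Rightarrow> word set monoid" where
  "RF n = \<lparr> carrier = rf_class n ` words n,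
            monoid.mult = (\<lambda>A B. {v. \<exists>a\<in>A. \<exists>b\<in>B. rf_eq n (a @ b) v}),
            one = rf_class n [] \<rparr>"

definition gen :: "nat \<Rightarrow> nat \<Rightarrow> word set" where
  "gen n i = rf_class n [(i, True)]"

definition hPSigma :: "nat \<Rightarrow> (word set \<Rightarrow> word set) monoid" where
  "hPSigma n = (AutoGroup (RF n)) \<lparr> carrier :=
     {\<phi> \<in> auto (RF n). \<forall>i\<in>{1..n}. \<exists>g\<in>carrier (RF n).
         \<phi> (gen n i) = g \<otimes>\<^bsub>RF n\<^esub> gen n i \<otimes>\<^bsub>RF n\<^esub> inv\<^bsub>RF n\<^esub> g} \<rparr>"

definition chi :: "nat \<Rightarrow> nat \<Rightarrow> nat \<Rightarrow> (word set \<Rightarrow> word set)" where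
  "chi n i j = (THE \<phi>. \<phi> \<in> auto (RF n) \<and>
     (\<forall>k\<in>{1..n}. \<phi> (gen n k) =
        (if k = i then inv\<^bsub>RF n\<^esub> (gen n j) \<otimes>\<^bsub>RF n\<^esub> gen n i \<otimes>\<^bsub>RF n\<^esub> gen n j
         else gen n k)))"

definition chi_index :: "nat \<Rightarrow> (nat \<times> nat) set" where
  "chi_index n = {(i, j). i \<in> {1..n} \<and> j \<in> {1..n} \<and> i \<noteq> j}"

definition abelianization :: "('a, 'b) monoid_scheme \<Rightarrow> 'a set monoid" where
  "abelianization G = G Mod (derived G (carrier G))"

end

theory Submission
  imports Defs
begin

text \<open>
  An automorphism \<phi> in hP\<Sigma>_n sends each x_k to some g_k x_k g_k^{-1}. Since x_k
  commutes with all its conjugates in RF_n, conjugation by x_k^{\<plusminus>1} fixes every conjugate of x_k,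
  so g_k may be chosen in the subgroup generated by the x_l with l \<noteq> k. For such h the partial
  conjugation x_k \<mapsto> h x_k h^{-1} (fixing the other generators) is a product of the \<chi>_kl^{\<plusminus>1},
  and composing partial conjugations one generator at a time reproduces \<phi>.

  Send x_i to (1,0,0), x_j to (0,1,0) and the other generators to 0 in the integral
  Heisenberg group; it is nilpotent of class 2, so the defining relations of RF_n hold there. If
  \<phi> x_i = g x_i g^{-1}, the central coordinate of the image of \<phi> x_i is minus the x_j-exponent sum of
  g. This integer is thus independent of g, additive in \<phi> (elements of hP\<Sigma>_n preserve exponent
  sums), and equal to 1 on \<chi>_ij and 0 on the other \<chi>_kl. Together these integers give a
  homomorphism from hP\<Sigma>_n to the free abelian group on the pairs (i, j) sending \<chi>_ij to the basis
  element (i, j); it inverts the obvious surjection from that free abelian group onto the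
  abelianization.
\<close>

lemma (in group) mult_inv_cancel_left [simp]:
  "x \<in> carrier G \<Longrightarrow> y \<in> carrier G \<Longrightarrow> x \<otimes> (inv x \<otimes> y) = y"
  by (simp flip: m_assoc)

lemma (in group) inv_mult_cancel_left [simp]:
  "x \<in> carrier G \<Longrightarrow> y \<in> carrier G \<Longrightarrow> inv x \<otimes> (x \<otimes> y) = y"
  by (simp flip: m_assoc)

lemma (in group) commutator_eq_one_iff:
  assumes "x \<in> carrier G" "y \<in> carrier G"
  shows "x \<otimes> y \<otimes> inv x \<otimes> inv y = \<one> \<longleftrightarrow> x \<otimes> y = y \<otimes> x"
proof -
  have "x \<otimes> y \<otimes> inv x \<otimes> inv y = (x \<otimes> y) \<otimes> inv (y \<otimes> x)"
    using assms by (simp add: m_assoc inv_mult_group)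
  also have "\<dots> = \<one> \<longleftrightarrow> x \<otimes> y = y \<otimes> x"
    using assms by (metis inv_closed m_closed r_inv inv_equality inv_inv)
  finally show ?thesis .
qed

lemma (in group) hom_eq_on_generate:
  assumes "group H" "h1 \<in> hom G H" "h2 \<in> hom G H" "S \<subseteq> carrier G"
    and "\<And>s. s \<in> S \<Longrightarrow> h1 s = h2 s" and "x \<in> generate G S"
  shows "h1 x = h2 x"
  using assms(6)
proof (induct rule: generate.induct)
  case one
  then show ?case using assms(1-3) by (simp add: hom_one)
next
  case (inv s)
  interpret h1: group_hom G H h1
    using assms(1,2) by (simp add: group_hom_def group_hom_axioms_def is_group)
  interpret h2: group_hom G H h2
    using assms(1,3) by (simp add: group_hom_def group_hom_axioms_def is_group)
  from inv show ?case using assms(4,5) by (simp add: subsetD)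
next
  case (eng x y)
  then show ?case using assms(2-4) generate_in_carrier by (simp add: hom_mult)
qed (use assms in simp)

lemma (in group) generate_conj_closed:
  assumes C: "C \<subseteq> carrier G"
    and closed: "\<And>s c. s \<in> S \<Longrightarrow> c \<in> C \<Longrightarrow> s \<otimes> c \<otimes> inv s \<in> C \<and> inv s \<otimes> c \<otimes> s \<in> C"
    and S: "S \<subseteq> carrier G" and g: "g \<in> generate G S" and c: "c \<in> C"
  shows "g \<otimes> c \<otimes> inv g \<in> C"
  using g c
proof (induct arbitrary: c rule: generate.induct)
  case one
  then show ?case using C by (auto simp: subsetD)
next
  case (inv s)
  then show ?case using closed S by (auto simp: subsetD)
next
  case (eng g h)
  have "g \<in> carrier G" "h \<in> carrier G" "c \<in> carrier G"
    using eng generate_in_carrier[OF S] C by auto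
  then have "g \<otimes> h \<otimes> c \<otimes> inv (g \<otimes> h) = g \<otimes> (h \<otimes> c \<otimes> inv h) \<otimes> inv g"
    by (simp add: m_assoc inv_mult_group)
  then show ?case using eng by simp
qed (use closed in blast)

definition commutes_with_conjugates :: "('a, 'b) monoid_scheme \<Rightarrow> 'a \<Rightarrow> bool" where
  "commutes_with_conjugates G x \<longleftrightarrow> x \<in> carrier G \<and>
     (\<forall>y\<in>carrier G. x \<otimes>\<^bsub>G\<^esub> (inv\<^bsub>G\<^esub> y \<otimes>\<^bsub>G\<^esub> x \<otimes>\<^bsub>G\<^esub> y) = (inv\<^bsub>G\<^esub> y \<otimes>\<^bsub>G\<^esub> x \<otimes>\<^bsub>G\<^esub> y) \<otimes>\<^bsub>G\<^esub> x)"

lemma (in group) commutes_with_conjugates_conj: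
  assumes x: "commutes_with_conjugates G x" and g: "g \<in> carrier G"
  shows "commutes_with_conjugates G (g \<otimes> x \<otimes> inv g)"
  unfolding commutes_with_conjugates_def
proof (intro conjI ballI)
  have xc: "x \<in> carrier G" using x by (simp add: commutes_with_conjugates_def)
  then show "g \<otimes> x \<otimes> inv g \<in> carrier G" using g by simp
  fix y assume y: "y \<in> carrier G"
  define z where "z = inv g \<otimes> y \<otimes> g"
  have z: "z \<in> carrier G" using g y by (simp add: z_def)
  have comm: "x \<otimes> (inv z \<otimes> x \<otimes> z) = (inv z \<otimes> x \<otimes> z) \<otimes> x"
    using x z by (simp add: commutes_with_conjugates_def)
  have conj: "inv y \<otimes> (g \<otimes> x \<otimes> inv g) \<otimes> y = g \<otimes> (inv z \<otimes> x \<otimes> z) \<otimes> inv g"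
    using g y xc by (simp add: z_def inv_mult_group m_assoc)
  show "g \<otimes> x \<otimes> inv g \<otimes> (inv y \<otimes> (g \<otimes> x \<otimes> inv g) \<otimes> y)
      = inv y \<otimes> (g \<otimes> x \<otimes> inv g) \<otimes> y \<otimes> (g \<otimes> x \<otimes> inv g)"
    unfolding conj using g z xc comm
    by (simp add: m_assoc) (simp flip: m_assoc)
qed

lemma (in group) commutes_with_conjugates_fixes_conjugate:
  assumes x: "commutes_with_conjugates G x" and y: "y \<in> carrier G"
  shows "x \<otimes> (y \<otimes> x \<otimes> inv y) \<otimes> inv x = y \<otimes> x \<otimes> inv y"
    and "inv x \<otimes> (y \<otimes> x \<otimes> inv y) \<otimes> x = y \<otimes> x \<otimes> inv y"
proof -
  have xc: "x \<in> carrier G" using x by (simp add: commutes_with_conjugates_def)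
  have "x \<otimes> (inv (inv y) \<otimes> x \<otimes> inv y) = (inv (inv y) \<otimes> x \<otimes> inv y) \<otimes> x"
    using x inv_closed[OF y] unfolding commutes_with_conjugates_def by blast
  then have comm: "x \<otimes> (y \<otimes> x \<otimes> inv y) = (y \<otimes> x \<otimes> inv y) \<otimes> x"
    using y by simp
  have "x \<otimes> (y \<otimes> x \<otimes> inv y) \<otimes> inv x = (y \<otimes> x \<otimes> inv y) \<otimes> x \<otimes> inv x"
    by (simp only: comm)
  also have "\<dots> = y \<otimes> x \<otimes> inv y"
    using xc y by (simp add: m_assoc)
  finally show "x \<otimes> (y \<otimes> x \<otimes> inv y) \<otimes> inv x = y \<otimes> x \<otimes> inv y" .
  have "inv x \<otimes> (y \<otimes> x \<otimes> inv y) \<otimes> x = inv x \<otimes> ((y \<otimes> x \<otimes> inv y) \<otimes> x)"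
    using xc y by (simp add: m_assoc)
  also have "\<dots> = inv x \<otimes> (x \<otimes> (y \<otimes> x \<otimes> inv y))"
    by (simp only: comm)
  also have "\<dots> = y \<otimes> x \<otimes> inv y"
    using xc y by simp
  finally show "inv x \<otimes> (y \<otimes> x \<otimes> inv y) \<otimes> x = y \<otimes> x \<otimes> inv y" .
qed

lemma (in group) derived_in_kernel_abelian:
  assumes A: "comm_group A" and h: "h \<in> hom G A"
  shows "derived G (carrier G) \<subseteq> kernel G A h"
proof -
  interpret A: comm_group A by (rule A)
  interpret h: group_hom G A h
    using h by (simp add: group_hom_def group_hom_axioms_def is_group A.is_group)
  have "derived_set G (carrier G) \<subseteq> kernel G A h"
  proof
    fix c assume "c \<in> derived_set G (carrier G)"
    then obtain x y where xy: "x \<in> carrier G" "y \<in> carrier G"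
      and c: "c = x \<otimes> y \<otimes> inv x \<otimes> inv y"
      by blast
    have "h c = h x \<otimes>\<^bsub>A\<^esub> h y \<otimes>\<^bsub>A\<^esub> inv\<^bsub>A\<^esub> h x \<otimes>\<^bsub>A\<^esub> inv\<^bsub>A\<^esub> h y"
      using xy by (simp add: c)
    also have "\<dots> = \<one>\<^bsub>A\<^esub>"
      using xy by (simp add: A.commutator_eq_one_iff A.m_comm)
    finally show "c \<in> kernel G A h"
      using xy by (simp add: c kernel_def)
  qed
  then show ?thesis
    unfolding derived_def by (rule generate_subgroup_incl[OF _ h.subgroup_kernel])
qed

lemma (in group) abelianization_universal:
  assumes A: "comm_group A" and h: "h \<in> hom G A"
  obtains \<theta> where "\<theta> \<in> hom (G Mod derived G (carrier G)) A"
    "\<And>x. x \<in> carrier G \<Longrightarrow> \<theta> (derived G (carrier G) #> x) = h x"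
proof -
  let ?D = "derived G (carrier G)"
  interpret D: normal ?D G by (rule derived_self_is_normal)
  interpret h: group_hom G A h
    using h A by (simp add: group_hom_def group_hom_axioms_def is_group comm_group.axioms(2))
  have D_ker: "?D \<subseteq> kernel G A h"
    using A h by (rule derived_in_kernel_abelian)
  show thesis
  proof (rule FactGroup_universal[OF h D.normal_axioms])
    fix x y assume x: "x \<in> carrier G" and y: "y \<in> carrier G" and xy: "?D #> x = ?D #> y"
    then have "y \<in> ?D #> x" using rcos_self[OF y D.subgroup_axioms] by simp
    then obtain d where d: "d \<in> ?D" "y = d \<otimes> x" unfolding r_coset_def by blast
    then show "h x = h y"
      using D_ker x D.subset by (auto simp: kernel_def)
  qed (rule that)
qed

lemma (in group) abelianization_iso_free_Abelian_group:
  assumes gen: "carrier G = generate G (f ` I)"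
    and h: "h \<in> hom G (free_Abelian_group I)"
    and h_f: "\<And>a. a \<in> I \<Longrightarrow> h (f a) = frag_of a"
  obtains \<psi> where "\<psi> \<in> iso (free_Abelian_group I) (G Mod derived G (carrier G))"
    "\<And>a. a \<in> I \<Longrightarrow> \<psi> (frag_of a) = derived G (carrier G) #> f a"
proof -
  let ?D = "derived G (carrier G)"
  let ?F = "free_Abelian_group I"
  interpret D: normal ?D G by (rule derived_self_is_normal)
  interpret Ab: comm_group "G Mod ?D" by (rule derived_quot_is_comm_group)
  interpret h: group_hom G ?F h
    using h by (simp add: group_hom_def group_hom_axioms_def is_group)
  have fI: "f ` I \<subseteq> carrier G"
    unfolding gen by (auto intro: generate.incl)
  then have "(\<lambda>a. ?D #> f a) ` I \<subseteq> carrier (G Mod ?D)"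
    by (auto simp: carrier_FactGroup)
  then obtain \<psi> where \<psi>: "\<psi> \<in> hom ?F (G Mod ?D)" and \<psi>_frag: "\<And>a. a \<in> I \<Longrightarrow> \<psi> (frag_of a) = ?D #> f a"
    by (rule Ab.free_Abelian_group_universal) (rule that, assumption+)
  obtain \<theta> where \<theta>: "\<theta> \<in> hom (G Mod ?D) ?F" and \<theta>_coset: "\<And>x. x \<in> carrier G \<Longrightarrow> \<theta> (?D #> x) = h x"
    using abelian_free_Abelian_group h by (rule abelianization_universal) (rule that, assumption+)
  have \<theta>\<psi>: "\<theta> (\<psi> c) = c" if "c \<in> carrier ?F" for c
  proof -
    have keys: "Poly_Mapping.keys c \<subseteq> I" using that by simp
    have \<theta>\<psi>_hom: "\<theta> \<circ> \<psi> \<in> hom ?F ?F" using \<psi> \<theta> by (rule Group.hom_compose)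
    show ?thesis
    proof (rule free_Abelian_group_induct[OF keys, where P = "\<lambda>c. \<theta> (\<psi> c) = c"])
      show "\<theta> (\<psi> 0) = 0"
        using hom_one[OF \<theta>\<psi>_hom] by simp
      show "\<theta> (\<psi> (x - y)) = x - y"
        if "Poly_Mapping.keys x \<subseteq> I" "Poly_Mapping.keys y \<subseteq> I" "\<theta> (\<psi> x) = x" "\<theta> (\<psi> y) = y" for x y
        using that hom_frag_diff[OF \<theta>\<psi>_hom] by simp
      show "\<theta> (\<psi> (frag_of a)) = frag_of a" if "a \<in> I" for a
        using that fI by (simp add: \<psi>_frag \<theta>_coset h_f image_subset_iff)
    qed
  qed
  have \<psi>h: "\<psi> (h x) = ?D #> x" if x: "x \<in> carrier G" for x
  proof -
    have "(\<psi> \<circ> h) x = (\<lambda>a. ?D #> a) x"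
    proof (rule hom_eq_on_generate[OF Ab.is_group Group.hom_compose[OF h \<psi>] D.r_coset_hom_Mod fI])
      show "x \<in> generate G (f ` I)" using x gen by blast
    qed (auto simp: h_f \<psi>_frag)
    then show ?thesis by simp
  qed
  have "\<psi> \<in> iso ?F (G Mod ?D)"
  proof (rule isoI[OF \<psi>], rule bij_betw_imageI)
    show "inj_on \<psi> (carrier ?F)"
      by (metis \<theta>\<psi> inj_on_inverseI)
    show "\<psi> ` carrier ?F = carrier (G Mod ?D)"
    proof
      show "\<psi> ` carrier ?F \<subseteq> carrier (G Mod ?D)"
        using hom_in_carrier[OF \<psi>] by blast
      show "carrier (G Mod ?D) \<subseteq> \<psi> ` carrier ?F"
        using \<psi>h h.hom_closed by (auto simp: carrier_FactGroup simp flip: \<psi>h)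
    qed
  qed
  then show thesis using \<psi>_frag by (rule that)
qed

lemma auto_extensional: "\<phi> \<in> auto G \<Longrightarrow> \<phi> \<in> extensional (carrier G)"
  by (simp add: auto_def Bij_imp_extensional)

lemma auto_surj: "\<phi> \<in> auto G \<Longrightarrow> \<phi> ` carrier G = carrier G"
  by (simp add: auto_def Bij_def bij_betw_def)

definition conjugating_autos :: "('a, 'b) monoid_scheme \<Rightarrow> 'a set \<Rightarrow> ('a \<Rightarrow> 'a) set" where
  "conjugating_autos G S =
     {\<phi> \<in> auto G. \<forall>x\<in>S. \<exists>g\<in>carrier G. \<phi> x = g \<otimes>\<^bsub>G\<^esub> x \<otimes>\<^bsub>G\<^esub> inv\<^bsub>G\<^esub> g}"

context group
begin

lemma auto_group_hom: "\<phi> \<in> auto G \<Longrightarrow> group_hom G G \<phi>"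
  by (simp add: auto_def group_hom_def group_hom_axioms_def is_group)

lemma carrier_AutoGroup: "carrier (AutoGroup G) = auto G"
  by (simp add: AutoGroup_def)

lemma one_AutoGroup: "\<one>\<^bsub>AutoGroup G\<^esub> = (\<lambda>x\<in>carrier G. x)"
  by (simp add: AutoGroup_def BijGroup_def)

lemma AutoGroup_mult_apply:
  "\<phi> \<in> auto G \<Longrightarrow> \<psi> \<in> auto G \<Longrightarrow> x \<in> carrier G \<Longrightarrow> (\<phi> \<otimes>\<^bsub>AutoGroup G\<^esub> \<psi>) x = \<phi> (\<psi> x)"
  by (simp add: AutoGroup_def BijGroup_def auto_def compose_def)

lemma AutoGroup_inv_apply:
  assumes \<phi>: "\<phi> \<in> auto G" and x: "x \<in> carrier G"
  shows "(inv\<^bsub>AutoGroup G\<^esub> \<phi>) (\<phi> x) = x"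
proof -
  interpret Aut: group "AutoGroup G" by (rule AutoGroup)
  have "inv\<^bsub>AutoGroup G\<^esub> \<phi> \<in> auto G"
    using \<phi> Aut.inv_closed by (simp add: carrier_AutoGroup)
  then have "(inv\<^bsub>AutoGroup G\<^esub> \<phi>) (\<phi> x) = (inv\<^bsub>AutoGroup G\<^esub> \<phi> \<otimes>\<^bsub>AutoGroup G\<^esub> \<phi>) x"
    using \<phi> x by (simp add: AutoGroup_mult_apply)
  also have "\<dots> = x"
    using \<phi> x by (simp add: carrier_AutoGroup one_AutoGroup)
  finally show ?thesis .
qed

lemma conjugating_autosI:
  "\<phi> \<in> auto G \<Longrightarrow> (\<And>x. x \<in> S \<Longrightarrow> \<exists>g\<in>carrier G. \<phi> x = g \<otimes> x \<otimes> inv g) \<Longrightarrow>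
   \<phi> \<in> conjugating_autos G S"
  by (simp add: conjugating_autos_def)

lemma conjugating_autosE:
  assumes "\<phi> \<in> conjugating_autos G S" "x \<in> S"
  obtains g where "g \<in> carrier G" "\<phi> x = g \<otimes> x \<otimes> inv g"
  using assms by (auto simp: conjugating_autos_def)

lemma conjugating_autos_auto: "\<phi> \<in> conjugating_autos G S \<Longrightarrow> \<phi> \<in> auto G"
  by (simp add: conjugating_autos_def)

lemma id_in_conjugating_autos:
  assumes S: "S \<subseteq> carrier G"
  shows "(\<lambda>x\<in>carrier G. x) \<in> conjugating_autos G S"
proof (rule conjugating_autosI[OF id_in_auto])
  fix x assume "x \<in> S"
  then show "\<exists>g\<in>carrier G. (\<lambda>x\<in>carrier G. x) x = g \<otimes> x \<otimes> inv g"
    using S by (intro bexI[of _ \<one>]) auto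
qed

lemma conjugating_autos_mult:
  assumes S: "S \<subseteq> carrier G"
    and \<phi>: "\<phi> \<in> conjugating_autos G S" and \<psi>: "\<psi> \<in> conjugating_autos G S"
  shows "\<phi> \<otimes>\<^bsub>AutoGroup G\<^esub> \<psi> \<in> conjugating_autos G S"
proof (rule conjugating_autosI)
  interpret Aut: group "AutoGroup G" by (rule AutoGroup)
  have \<phi>_auto: "\<phi> \<in> auto G" and \<psi>_auto: "\<psi> \<in> auto G"
    using \<phi> \<psi> by (simp_all add: conjugating_autos_auto)
  interpret \<phi>: group_hom G G \<phi> using \<phi>_auto by (rule auto_group_hom)
  show "\<phi> \<otimes>\<^bsub>AutoGroup G\<^esub> \<psi> \<in> auto G"
    using \<phi>_auto \<psi>_auto Aut.m_closed by (simp add: carrier_AutoGroup)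
  fix x assume x: "x \<in> S"
  then have xc: "x \<in> carrier G" using S by blast
  obtain g where g: "g \<in> carrier G" "\<psi> x = g \<otimes> x \<otimes> inv g"
    using \<psi> x by (rule conjugating_autosE)
  obtain h where h: "h \<in> carrier G" "\<phi> x = h \<otimes> x \<otimes> inv h"
    using \<phi> x by (rule conjugating_autosE)
  have "(\<phi> \<otimes>\<^bsub>AutoGroup G\<^esub> \<psi>) x = \<phi> g \<otimes> (h \<otimes> x \<otimes> inv h) \<otimes> inv (\<phi> g)"
    using \<phi>_auto \<psi>_auto g h xc by (simp add: AutoGroup_mult_apply)
  also have "\<dots> = (\<phi> g \<otimes> h) \<otimes> x \<otimes> inv (\<phi> g \<otimes> h)"
    using g h xc by (simp add: m_assoc inv_mult_group)
  finally show "\<exists>k\<in>carrier G. (\<phi> \<otimes>\<^bsub>AutoGroup G\<^esub> \<psi>) x = k \<otimes> x \<otimes> inv k"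
    using g h by (intro bexI[of _ "\<phi> g \<otimes> h"]) auto
qed

lemma conjugating_autos_inv:
  assumes S: "S \<subseteq> carrier G" and \<phi>: "\<phi> \<in> conjugating_autos G S"
  shows "inv\<^bsub>AutoGroup G\<^esub> \<phi> \<in> conjugating_autos G S"
proof -
  interpret Aut: group "AutoGroup G" by (rule AutoGroup)
  have \<phi>_auto: "\<phi> \<in> auto G" using \<phi> by (rule conjugating_autos_auto)
  define \<psi> where "\<psi> = inv\<^bsub>AutoGroup G\<^esub> \<phi>"
  have \<psi>_auto: "\<psi> \<in> auto G"
    using \<phi>_auto Aut.inv_closed by (simp add: \<psi>_def carrier_AutoGroup)
  interpret \<psi>: group_hom G G \<psi> using \<psi>_auto by (rule auto_group_hom)
  have "\<psi> \<in> conjugating_autos G S"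
  proof (rule conjugating_autosI[OF \<psi>_auto])
    fix x assume x: "x \<in> S"
    then have xc: "x \<in> carrier G" using S by blast
    obtain g where g: "g \<in> carrier G" "\<phi> x = g \<otimes> x \<otimes> inv g"
      using \<phi> x by (rule conjugating_autosE)
    have "\<psi> g \<otimes> \<psi> x \<otimes> inv (\<psi> g) = \<psi> (\<phi> x)"
      using g xc by simp
    also have "\<dots> = x"
      using AutoGroup_inv_apply[OF \<phi>_auto xc] by (simp add: \<psi>_def)
    finally have conj: "\<psi> g \<otimes> \<psi> x \<otimes> inv (\<psi> g) = x" .
    have "\<psi> x = inv (\<psi> g) \<otimes> (\<psi> g \<otimes> \<psi> x \<otimes> inv (\<psi> g)) \<otimes> inv (inv (\<psi> g))"
      using g xc by (simp add: m_assoc)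
    also have "\<dots> = inv (\<psi> g) \<otimes> x \<otimes> inv (inv (\<psi> g))"
      by (simp only: conj)
    finally show "\<exists>k\<in>carrier G. \<psi> x = k \<otimes> x \<otimes> inv k"
      using g by (intro bexI[of _ "inv (\<psi> g)"]) auto
  qed
  then show ?thesis by (simp add: \<psi>_def)
qed

lemma subgroup_conjugating_autos:
  assumes S: "S \<subseteq> carrier G"
  shows "subgroup (conjugating_autos G S) (AutoGroup G)"
proof (rule group.subgroupI[OF AutoGroup])
  show "conjugating_autos G S \<subseteq> carrier (AutoGroup G)"
    by (auto simp: carrier_AutoGroup conjugating_autos_auto)
  show "conjugating_autos G S \<noteq> {}"
    using id_in_conjugating_autos[OF S] by blast
qed (simp_all add: S conjugating_autos_mult conjugating_autos_inv)

lemma conjugating_auto_abelian_hom: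
  assumes gen: "carrier G = generate G S" and \<phi>: "\<phi> \<in> conjugating_autos G S"
    and A: "comm_group A" and h: "h \<in> hom G A" and x: "x \<in> carrier G"
  shows "h (\<phi> x) = h x"
proof -
  interpret A: comm_group A by (rule A)
  interpret h: group_hom G A h
    using h by (simp add: group_hom_def group_hom_axioms_def is_group A.is_group)
  have S: "S \<subseteq> carrier G"
    unfolding gen by (auto intro: generate.incl)
  have \<phi>_hom: "\<phi> \<in> hom G G"
    using \<phi> by (simp add: conjugating_autos_auto[THEN auto_group_hom] group_hom.homh)
  have "(h \<circ> \<phi>) x = h x"
  proof (rule hom_eq_on_generate[OF A.is_group Group.hom_compose[OF \<phi>_hom h] h S])
    fix s assume s: "s \<in> S"
    obtain g where g: "g \<in> carrier G" "\<phi> s = g \<otimes> s \<otimes> inv g"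
      using \<phi> s by (rule conjugating_autosE)
    have "(h \<circ> \<phi>) s = h g \<otimes>\<^bsub>A\<^esub> h s \<otimes>\<^bsub>A\<^esub> inv\<^bsub>A\<^esub> h g"
      using g s S by auto
    also have "\<dots> = h s \<otimes>\<^bsub>A\<^esub> (h g \<otimes>\<^bsub>A\<^esub> inv\<^bsub>A\<^esub> h g)"
      using g s S by (simp add: A.m_comm[of "h g" "h s"] A.m_assoc subsetD)
    finally show "(h \<circ> \<phi>) s = h s"
      using g s S by (simp add: subsetD)
  qed (use x in \<open>simp only: gen\<close>)
  then show ?thesis by simp
qed

end

section \<open>The reduced free group RF_n\<close>

lemma letter_inv_inv [simp]: "letter_inv (letter_inv a) = a"
  by (simp add: letter_inv_def)

lemma word_inv_inv [simp]: "word_inv (word_inv w) = w"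
  by (simp add: word_inv_def rev_map comp_def)

lemma word_inv_Nil [simp]: "word_inv [] = []"
  and word_inv_Cons [simp]: "word_inv (a # w) = word_inv w @ [letter_inv a]"
  and word_inv_append [simp]: "word_inv (u @ v) = word_inv v @ word_inv u"
  by (simp_all add: word_inv_def)

lemma letters_iff [simp]: "(i, b) \<in> letters n \<longleftrightarrow> i \<in> {1..n}"
  by (simp add: letters_def)

lemma letter_inv_in_letters [simp]: "letter_inv a \<in> letters n \<longleftrightarrow> a \<in> letters n"
  by (cases a) (simp add: letter_inv_def)

lemma words_Nil [simp]: "[] \<in> words n"
  and words_Cons [simp]: "a # w \<in> words n \<longleftrightarrow> a \<in> letters n \<and> w \<in> words n"
  and words_append [simp]: "u @ v \<in> words n \<longleftrightarrow> u \<in> words n \<and> v \<in> words n"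
  by (auto simp: words_def)

lemma word_inv_in_words [simp]: "word_inv w \<in> words n \<longleftrightarrow> w \<in> words n"
  by (induct w) auto

lemma relator_in_words: "i \<in> {1..n} \<Longrightarrow> w \<in> words n \<Longrightarrow> relator i w \<in> words n"
  by (simp add: relator_def comm_word_def)

lemma rf_eq_in_words: "rf_eq n u v \<Longrightarrow> u \<in> words n \<and> v \<in> words n"
  by (induct rule: rf_eq.induct) (auto simp: relator_in_words)

lemma rf_eq_append_right: "rf_eq n u v \<Longrightarrow> w \<in> words n \<Longrightarrow> rf_eq n (u @ w) (v @ w)"
proof (induct rule: rf_eq.induct)
  case (rf_cancel u v a)
  then show ?case using rf_eq.rf_cancel[of u n "v @ w" a] by simp
next
  case (rf_rel u v i x)
  then show ?case using rf_eq.rf_rel[of u n "v @ w" i x] by simp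
qed (auto intro: rf_eq.intros)

lemma rf_eq_append_left: "rf_eq n u v \<Longrightarrow> w \<in> words n \<Longrightarrow> rf_eq n (w @ u) (w @ v)"
proof (induct rule: rf_eq.induct)
  case (rf_cancel u v a)
  then show ?case using rf_eq.rf_cancel[of "w @ u" n v a] by simp
next
  case (rf_rel u v i x)
  then show ?case using rf_eq.rf_rel[of "w @ u" n v i x] by simp
qed (auto intro: rf_eq.intros)

lemma rf_eq_append: "rf_eq n u u' \<Longrightarrow> rf_eq n v v' \<Longrightarrow> rf_eq n (u @ v) (u' @ v')"
  by (meson rf_eq.rf_trans rf_eq_append_left rf_eq_append_right rf_eq_in_words)

lemma rf_eq_word_inv_right: "w \<in> words n \<Longrightarrow> rf_eq n (w @ word_inv w) []"
proof (induct w)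
  case Nil
  then show ?case by (simp add: rf_refl)
next
  case (Cons a w)
  then have "rf_eq n ([a] @ (w @ word_inv w) @ [letter_inv a]) ([a] @ [] @ [letter_inv a])"
    by (intro rf_eq_append rf_refl) auto
  moreover have "rf_eq n ([] @ [a, letter_inv a] @ []) ([] @ [])"
    using Cons by (intro rf_cancel) auto
  ultimately show ?case by (auto intro: rf_trans)
qed

lemma rf_eq_word_inv_left: "w \<in> words n \<Longrightarrow> rf_eq n (word_inv w @ w) []"
  using rf_eq_word_inv_right[of "word_inv w" n] by simp

lemma rf_class_eq_iff: "u \<in> words n \<Longrightarrow> rf_class n u = rf_class n v \<longleftrightarrow> rf_eq n u v"
  unfolding rf_class_def by (auto intro: rf_eq.intros)

lemma rf_class_self: "u \<in> words n \<Longrightarrow> u \<in> rf_class n u"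
  by (simp add: rf_class_def rf_refl)

lemma RF_carrier: "carrier (RF n) = rf_class n ` words n"
  by (simp add: RF_def)

lemma RF_one: "\<one>\<^bsub>RF n\<^esub> = rf_class n []"
  by (simp add: RF_def)

lemma RF_mult: "u \<in> words n \<Longrightarrow> v \<in> words n \<Longrightarrow>
   rf_class n u \<otimes>\<^bsub>RF n\<^esub> rf_class n v = rf_class n (u @ v)"
  unfolding RF_def rf_class_def
  by (auto intro: rf_refl rf_trans rf_eq_append)

lemma RF_group: "group (RF n)"
proof (rule groupI)
  fix x assume "x \<in> carrier (RF n)"
  then obtain w where "w \<in> words n" "x = rf_class n w"
    by (auto simp: RF_carrier)
  then show "\<exists>y\<in>carrier (RF n). y \<otimes>\<^bsub>RF n\<^esub> x = \<one>\<^bsub>RF n\<^esub>"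
    by (intro bexI[of _ "rf_class n (word_inv w)"])
       (auto simp: RF_carrier RF_mult RF_one rf_class_eq_iff rf_eq_word_inv_left)
qed (auto simp: RF_carrier RF_mult RF_one)

interpretation RF: group "RF n" for n
  by (rule RF_group)

lemma RF_inv: "w \<in> words n \<Longrightarrow> inv\<^bsub>RF n\<^esub> (rf_class n w) = rf_class n (word_inv w)"
  by (rule RF.inv_equality)
     (auto simp: RF_carrier RF_mult RF_one rf_class_eq_iff rf_eq_word_inv_left)

lemma rf_class_in_RF [simp]: "w \<in> words n \<Longrightarrow> rf_class n w \<in> carrier (RF n)"
  by (simp add: RF_carrier)

lemma gen_in_RF [simp]: "i \<in> {1..n} \<Longrightarrow> gen n i \<in> carrier (RF n)"
  by (simp add: gen_def)

lemma rf_class_letter: "i \<in> {1..n} \<Longrightarrow>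
   rf_class n [(i, b)] = (if b then gen n i else inv\<^bsub>RF n\<^esub> gen n i)"
  by (simp add: gen_def RF_inv letter_inv_def)

lemma gen_commutes_with_conjugates:
  assumes i: "i \<in> {1..n}"
  shows "commutes_with_conjugates (RF n) (gen n i)"
  unfolding commutes_with_conjugates_def
proof (intro conjI ballI)
  show "gen n i \<in> carrier (RF n)" using i by simp
  fix y assume "y \<in> carrier (RF n)"
  then obtain w where w: "w \<in> words n" "y = rf_class n w" by (auto simp: RF_carrier)
  have "rf_eq n ([] @ relator i w @ []) ([] @ [])"
    using i w by (intro rf_rel) auto
  then have "rf_class n (relator i w) = \<one>\<^bsub>RF n\<^esub>"
    using i w by (simp add: RF_one rf_class_eq_iff relator_in_words)
  moreover have "rf_class n (relator i w) = gen n i \<otimes>\<^bsub>RF n\<^esub> (inv\<^bsub>RF n\<^esub> y \<otimes>\<^bsub>RF n\<^esub> gen n i \<otimes>\<^bsub>RF n\<^esub> y)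
     \<otimes>\<^bsub>RF n\<^esub> inv\<^bsub>RF n\<^esub> gen n i \<otimes>\<^bsub>RF n\<^esub> inv\<^bsub>RF n\<^esub> (inv\<^bsub>RF n\<^esub> y \<otimes>\<^bsub>RF n\<^esub> gen n i \<otimes>\<^bsub>RF n\<^esub> y)"
    using i w by (simp add: relator_def comm_word_def gen_def RF_mult RF_inv
        del: word_inv_append word_inv_Cons)
  ultimately show "gen n i \<otimes>\<^bsub>RF n\<^esub> (inv\<^bsub>RF n\<^esub> y \<otimes>\<^bsub>RF n\<^esub> gen n i \<otimes>\<^bsub>RF n\<^esub> y)
      = (inv\<^bsub>RF n\<^esub> y \<otimes>\<^bsub>RF n\<^esub> gen n i \<otimes>\<^bsub>RF n\<^esub> y) \<otimes>\<^bsub>RF n\<^esub> gen n i"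
    using i w by (simp add: RF.commutator_eq_one_iff)
qed

fun word_eval :: "('a, 'b) monoid_scheme \<Rightarrow> (nat \<Rightarrow> 'a) \<Rightarrow> word \<Rightarrow> 'a" where
  "word_eval G f [] = \<one>\<^bsub>G\<^esub>"
| "word_eval G f (a # w) =
     (if snd a then f (fst a) else inv\<^bsub>G\<^esub> f (fst a)) \<otimes>\<^bsub>G\<^esub> word_eval G f w"

definition RF_lift :: "nat \<Rightarrow> ('a, 'b) monoid_scheme \<Rightarrow> (nat \<Rightarrow> 'a) \<Rightarrow> word set \<Rightarrow> 'a" where
  "RF_lift n G f = (\<lambda>A\<in>carrier (RF n). word_eval G f (SOME w. w \<in> A))"

locale RF_lifting = group G for G (structure) +
  fixes n :: nat and f :: "nat \<Rightarrow> 'a"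
  assumes commutes: "i \<in> {1..n} \<Longrightarrow> commutes_with_conjugates G (f i)"
begin

lemma f_closed: "i \<in> {1..n} \<Longrightarrow> f i \<in> carrier G"
  using commutes by (simp add: commutes_with_conjugates_def)

lemma word_eval_closed: "w \<in> words n \<Longrightarrow> word_eval G f w \<in> carrier G"
  by (induct w) (auto simp: f_closed letters_def)

lemma word_eval_append:
  "u \<in> words n \<Longrightarrow> v \<in> words n \<Longrightarrow> word_eval G f (u @ v) = word_eval G f u \<otimes> word_eval G f v"
  by (induct u) (auto simp: f_closed letters_def word_eval_closed m_assoc)

lemma word_eval_word_inv: "w \<in> words n \<Longrightarrow> word_eval G f (word_inv w) = inv (word_eval G f w)"
  by (induct w) (auto simp: f_closed letters_def letter_inv_def word_eval_closed word_eval_append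
      inv_mult_group)

lemma word_eval_in_generate: "w \<in> words n \<Longrightarrow> word_eval G f w \<in> generate G (f ` {1..n})"
proof (induct w)
  case (Cons a w)
  then have "(if snd a then f (fst a) else inv f (fst a)) \<in> generate G (f ` {1..n})"
    by (cases a) (auto intro: generate.incl generate.inv)
  with Cons show ?case by (auto intro: generate.eng)
qed (simp add: generate.one)

lemma word_eval_relator:
  assumes i: "i \<in> {1..n}" and w: "w \<in> words n"
  shows "word_eval G f (relator i w) = \<one>"
proof -
  define y where "y = word_eval G f w"
  define c where "c = inv y \<otimes> f i \<otimes> y"
  have y: "y \<in> carrier G" using w by (simp add: y_def word_eval_closed)
  have "word_eval G f (relator i w) = f i \<otimes> c \<otimes> inv (f i) \<otimes> inv c"
    using i w y by (simp add: relator_def comm_word_def word_eval_append word_eval_word_inv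
        word_eval_closed f_closed c_def y_def m_assoc
        del: word_inv_append word_inv_Cons)
  also have "\<dots> = \<one>"
    using commutes[OF i] y f_closed[OF i]
    by (subst commutator_eq_one_iff) (auto simp: c_def commutes_with_conjugates_def)
  finally show ?thesis .
qed

lemma word_eval_rf_eq: "rf_eq n u v \<Longrightarrow> word_eval G f u = word_eval G f v"
proof (induct rule: rf_eq.induct)
  case (rf_cancel u v a)
  then show ?case
    by (cases a) (auto simp: word_eval_append word_eval_closed f_closed letter_inv_def m_assoc)
next
  case (rf_rel u v i w)
  then show ?case
    by (simp add: word_eval_append word_eval_closed relator_in_words word_eval_relator)
qed simp_all

lemma RF_lift_class: "w \<in> words n \<Longrightarrow> RF_lift n G f (rf_class n w) = word_eval G f w"
proof -
  assume w: "w \<in> words n"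
  have "(SOME v. v \<in> rf_class n w) \<in> rf_class n w"
    using rf_class_self[OF w] by (rule someI)
  then have "rf_eq n w (SOME v. v \<in> rf_class n w)"
    by (simp add: rf_class_def)
  then show ?thesis
    using w by (simp add: RF_lift_def word_eval_rf_eq)
qed

lemma RF_lift_hom: "RF_lift n G f \<in> hom (RF n) G"
  by (rule homI) (auto simp: RF_carrier RF_mult RF_lift_class word_eval_closed word_eval_append)

lemma RF_lift_gen: "i \<in> {1..n} \<Longrightarrow> RF_lift n G f (gen n i) = f i"
  by (simp add: gen_def RF_lift_class f_closed)

end

lemma RF_lift_extensional: "RF_lift n G f \<in> extensional (carrier (RF n))"
  by (simp add: RF_lift_def)

interpretation RF_gens: RF_lifting "RF n" n "gen n" for n
  by unfold_locales (rule gen_commutes_with_conjugates)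

lemma word_eval_gen: "w \<in> words n \<Longrightarrow> word_eval (RF n) (gen n) w = rf_class n w"
proof (induct w)
  case Nil
  then show ?case by (simp add: RF_one)
next
  case (Cons a w)
  obtain i b where a: "a = (i, b)" by (cases a)
  have "rf_class n (a # w) = rf_class n [(i, b)] \<otimes>\<^bsub>RF n\<^esub> rf_class n w"
    using Cons.prems by (simp add: a RF_mult)
  with Cons a show ?case by (simp add: rf_class_letter)
qed

lemma RF_generate: "carrier (RF n) = generate (RF n) (gen n ` {1..n})"
proof
  show "carrier (RF n) \<subseteq> generate (RF n) (gen n ` {1..n})"
  proof
    fix A assume "A \<in> carrier (RF n)"
    then obtain w where "w \<in> words n" "A = rf_class n w" by (auto simp: RF_carrier)
    then show "A \<in> generate (RF n) (gen n ` {1..n})"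
      using RF_gens.word_eval_in_generate by (simp flip: word_eval_gen)
  qed
  show "generate (RF n) (gen n ` {1..n}) \<subseteq> carrier (RF n)"
  proof
    fix x assume "x \<in> generate (RF n) (gen n ` {1..n})"
    then show "x \<in> carrier (RF n)" by (rule RF.generate_in_carrier[rotated]) auto
  qed
qed

lemma RF_hom_eqI:
  assumes "group H" "h1 \<in> hom (RF n) H" "h2 \<in> hom (RF n) H"
    and "\<And>i. i \<in> {1..n} \<Longrightarrow> h1 (gen n i) = h2 (gen n i)" and "x \<in> carrier (RF n)"
  shows "h1 x = h2 x"
proof -
  have x: "x \<in> generate (RF n) (gen n ` {1..n})"
    using assms(5) RF_generate by blast
  show ?thesis
    by (rule RF.hom_eq_on_generate[OF assms(1-3) _ _ x]) (auto simp: assms(4))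
qed

lemma RF_hom_ext:
  assumes "h1 \<in> hom (RF n) (RF n)" "h1 \<in> extensional (carrier (RF n))"
    and "h2 \<in> hom (RF n) (RF n)" "h2 \<in> extensional (carrier (RF n))"
    and "\<And>i. i \<in> {1..n} \<Longrightarrow> h1 (gen n i) = h2 (gen n i)"
  shows "h1 = h2"
  by (rule extensionalityI[OF assms(2,4)]) (rule RF_hom_eqI[OF RF_group assms(1,3,5)])

lemma RF_auto_eqI:
  assumes "\<phi> \<in> auto (RF n)" "\<psi> \<in> auto (RF n)"
    and "\<And>i. i \<in> {1..n} \<Longrightarrow> \<phi> (gen n i) = \<psi> (gen n i)"
  shows "\<phi> = \<psi>"
proof (rule RF_hom_ext)
  show "\<phi> \<in> hom (RF n) (RF n)" "\<psi> \<in> hom (RF n) (RF n)"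
    using assms(1,2) by (simp_all add: auto_def)
  show "\<phi> \<in> extensional (carrier (RF n))" "\<psi> \<in> extensional (carrier (RF n))"
    using assms(1,2) by (simp_all add: auto_extensional)
qed (rule assms(3))

lemma id_hom_RF: "(\<lambda>x\<in>carrier (RF n). x) \<in> hom (RF n) (RF n)"
  using RF.id_in_auto by (simp add: auto_def)

section \<open>hP\<Sigma>_n and partial conjugations\<close>

lemma hPSigma_conjugating_autos:
  "hPSigma n = (AutoGroup (RF n))\<lparr>carrier := conjugating_autos (RF n) (gen n ` {1..n})\<rparr>"
  by (simp add: hPSigma_def conjugating_autos_def)

lemma carrier_hPSigma: "carrier (hPSigma n) = conjugating_autos (RF n) (gen n ` {1..n})"
  by (simp add: hPSigma_conjugating_autos)

lemma subgroup_hPSigma: "subgroup (carrier (hPSigma n)) (AutoGroup (RF n))"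
  unfolding carrier_hPSigma by (rule RF.subgroup_conjugating_autos) auto

lemma group_hPSigma: "group (hPSigma n)"
  unfolding hPSigma_conjugating_autos
  by (rule subgroup.subgroup_is_group[OF subgroup_hPSigma[unfolded carrier_hPSigma] RF.AutoGroup])

interpretation hP: group "hPSigma n" for n
  by (rule group_hPSigma)

lemma hPSigma_auto: "\<phi> \<in> carrier (hPSigma n) \<Longrightarrow> \<phi> \<in> auto (RF n)"
  by (simp add: carrier_hPSigma RF.conjugating_autos_auto)

lemma one_hPSigma: "\<one>\<^bsub>hPSigma n\<^esub> = (\<lambda>x\<in>carrier (RF n). x)"
  by (simp add: hPSigma_conjugating_autos RF.one_AutoGroup)

lemma hPSigma_mult_apply:
  "\<phi> \<in> carrier (hPSigma n) \<Longrightarrow> \<psi> \<in> carrier (hPSigma n) \<Longrightarrow> x \<in> carrier (RF n) \<Longrightarrow>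
   (\<phi> \<otimes>\<^bsub>hPSigma n\<^esub> \<psi>) x = \<phi> (\<psi> x)"
  by (simp add: hPSigma_conjugating_autos RF.AutoGroup_mult_apply RF.conjugating_autos_auto)

definition partial_conj :: "nat \<Rightarrow> nat \<Rightarrow> word set \<Rightarrow> word set \<Rightarrow> word set" where
  "partial_conj n i c = RF_lift n (RF n)
     (\<lambda>k. if k = i then c \<otimes>\<^bsub>RF n\<^esub> gen n i \<otimes>\<^bsub>RF n\<^esub> inv\<^bsub>RF n\<^esub> c else gen n k)"

definition RF_without :: "nat \<Rightarrow> nat \<Rightarrow> word set set" where
  "RF_without n i = generate (RF n) (gen n ` ({1..n} - {i}))"

lemma subgroup_RF_without: "subgroup (RF_without n i) (RF n)"
  unfolding RF_without_def by (rule RF.generate_is_subgroup) auto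

lemma RF_without_in_RF: "c \<in> RF_without n i \<Longrightarrow> c \<in> carrier (RF n)"
  using subgroup.subset[OF subgroup_RF_without] by blast

context
  fixes n i :: nat and c :: "word set"
  assumes c: "c \<in> carrier (RF n)"
begin

interpretation partial_conj: RF_lifting "RF n" n
  "\<lambda>k. if k = i then c \<otimes>\<^bsub>RF n\<^esub> gen n i \<otimes>\<^bsub>RF n\<^esub> inv\<^bsub>RF n\<^esub> c else gen n k"
  using c by unfold_locales (simp add: RF.commutes_with_conjugates_conj gen_commutes_with_conjugates)

lemma partial_conj_hom: "partial_conj n i c \<in> hom (RF n) (RF n)"
  unfolding partial_conj_def by (rule partial_conj.RF_lift_hom)

lemma partial_conj_gen: "k \<in> {1..n} \<Longrightarrow>
   partial_conj n i c (gen n k) = (if k = i then c \<otimes>\<^bsub>RF n\<^esub> gen n i \<otimes>\<^bsub>RF n\<^esub> inv\<^bsub>RF n\<^esub> c else gen n k)"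
  unfolding partial_conj_def by (rule partial_conj.RF_lift_gen)

lemma partial_conj_fixes_RF_without:
  assumes d: "d \<in> RF_without n i"
  shows "partial_conj n i c d = d"
proof -
  have "partial_conj n i c d = (\<lambda>x\<in>carrier (RF n). x) d"
    using d unfolding RF_without_def
    by (rule RF.hom_eq_on_generate[OF RF_group partial_conj_hom id_hom_RF, rotated 2])
       (auto simp: partial_conj_gen)
  then show ?thesis using RF_without_in_RF[OF d] by simp
qed

end

lemma partial_conj_extensional: "partial_conj n i c \<in> extensional (carrier (RF n))"
  by (simp add: partial_conj_def RF_lift_extensional)

lemma partial_conj_compose:
  assumes c: "c \<in> RF_without n i" and d: "d \<in> carrier (RF n)" and x: "x \<in> carrier (RF n)"
  shows "partial_conj n i d (partial_conj n i c x) = partial_conj n i (c \<otimes>\<^bsub>RF n\<^esub> d) x"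
proof -
  have cc: "c \<in> carrier (RF n)" using c by (rule RF_without_in_RF)
  interpret d: group_hom "RF n" "RF n" "partial_conj n i d"
    using d by (simp add: group_hom_def group_hom_axioms_def RF_group partial_conj_hom)
  have "(partial_conj n i d \<circ> partial_conj n i c) x
      = partial_conj n i (c \<otimes>\<^bsub>RF n\<^esub> d) x"
  proof (rule RF_hom_eqI[OF RF_group _ _ _ x])
    show "(partial_conj n i d \<circ> partial_conj n i c) \<in> hom (RF n) (RF n)"
      by (rule hom_compose[OF partial_conj_hom[OF cc] partial_conj_hom[OF d]])
    show "partial_conj n i (c \<otimes>\<^bsub>RF n\<^esub> d) \<in> hom (RF n) (RF n)"
      using cc d by (intro partial_conj_hom) simp
    fix k assume k: "k \<in> {1..n}"
    show "(partial_conj n i d \<circ> partial_conj n i c) (gen n k)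
        = partial_conj n i (c \<otimes>\<^bsub>RF n\<^esub> d) (gen n k)"
      using cc d k
      by (simp add: partial_conj_gen partial_conj_fixes_RF_without[OF d c]
          RF.m_assoc RF.inv_mult_group)
  qed
  then show ?thesis by simp
qed

lemma partial_conj_one: "partial_conj n i \<one>\<^bsub>RF n\<^esub> = (\<lambda>x\<in>carrier (RF n). x)"
proof (rule RF_hom_ext)
  fix k assume "k \<in> {1..n}"
  then show "partial_conj n i \<one>\<^bsub>RF n\<^esub> (gen n k) = (\<lambda>x\<in>carrier (RF n). x) (gen n k)"
    by (simp add: partial_conj_gen)
qed (simp_all add: partial_conj_hom partial_conj_extensional id_hom_RF)

lemma partial_conj_auto:
  assumes c: "c \<in> RF_without n i"
  shows "partial_conj n i c \<in> auto (RF n)"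
proof -
  have cc: "c \<in> carrier (RF n)" using c by (rule RF_without_in_RF)
  have c': "inv\<^bsub>RF n\<^esub> c \<in> RF_without n i"
    using c subgroup.m_inv_closed[OF subgroup_RF_without] by blast
  have "bij_betw (partial_conj n i c) (carrier (RF n)) (carrier (RF n))"
  proof (rule bij_betwI[where g = "partial_conj n i (inv\<^bsub>RF n\<^esub> c)"])
    show "partial_conj n i c \<in> carrier (RF n) \<rightarrow> carrier (RF n)"
      using partial_conj_hom[OF cc] by (simp add: hom_def)
    show "partial_conj n i (inv\<^bsub>RF n\<^esub> c) \<in> carrier (RF n) \<rightarrow> carrier (RF n)"
      using partial_conj_hom[of "inv\<^bsub>RF n\<^esub> c"] cc by (simp add: hom_def)
    fix x assume x: "x \<in> carrier (RF n)"
    show "partial_conj n i (inv\<^bsub>RF n\<^esub> c) (partial_conj n i c x) = x"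
      using partial_conj_compose[OF c _ x, of "inv\<^bsub>RF n\<^esub> c"] cc x by (simp add: partial_conj_one)
    show "partial_conj n i c (partial_conj n i (inv\<^bsub>RF n\<^esub> c) x) = x"
      using partial_conj_compose[OF c' cc x] cc x by (simp add: partial_conj_one)
  qed
  then show ?thesis
    using partial_conj_hom[OF cc] partial_conj_extensional by (simp add: auto_def Bij_def)
qed

lemma partial_conj_in_hPSigma:
  assumes c: "c \<in> RF_without n i"
  shows "partial_conj n i c \<in> carrier (hPSigma n)"
  unfolding carrier_hPSigma
proof (rule RF.conjugating_autosI[OF partial_conj_auto[OF c]])
  fix x assume "x \<in> gen n ` {1..n}"
  then obtain k where k: "k \<in> {1..n}" "x = gen n k" by blast
  have cc: "c \<in> carrier (RF n)" using c by (rule RF_without_in_RF)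
  show "\<exists>g\<in>carrier (RF n). partial_conj n i c x = g \<otimes>\<^bsub>RF n\<^esub> x \<otimes>\<^bsub>RF n\<^esub> inv\<^bsub>RF n\<^esub> g"
  proof (cases "k = i")
    case True
    then show ?thesis using k cc by (intro bexI[of _ c]) (simp_all add: partial_conj_gen)
  next
    case False
    then show ?thesis using k cc by (intro bexI[of _ "\<one>\<^bsub>RF n\<^esub>"]) (simp_all add: partial_conj_gen)
  qed
qed

lemma partial_conj_mult:
  assumes c: "c \<in> RF_without n i" and d: "d \<in> RF_without n i"
  shows "partial_conj n i d \<otimes>\<^bsub>hPSigma n\<^esub> partial_conj n i c = partial_conj n i (c \<otimes>\<^bsub>RF n\<^esub> d)"
proof (rule extensionalityI)
  show "partial_conj n i d \<otimes>\<^bsub>hPSigma n\<^esub> partial_conj n i c \<in> extensional (carrier (RF n))"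
    using c d by (intro auto_extensional hPSigma_auto hP.m_closed partial_conj_in_hPSigma)
  show "partial_conj n i (c \<otimes>\<^bsub>RF n\<^esub> d) \<in> extensional (carrier (RF n))"
    by (rule partial_conj_extensional)
  fix x assume "x \<in> carrier (RF n)"
  then show "(partial_conj n i d \<otimes>\<^bsub>hPSigma n\<^esub> partial_conj n i c) x = partial_conj n i (c \<otimes>\<^bsub>RF n\<^esub> d) x"
    using c d
    by (simp add: hPSigma_mult_apply partial_conj_in_hPSigma partial_conj_compose RF_without_in_RF)
qed

lemma chi_eq_partial_conj:
  assumes i: "i \<in> {1..n}" and j: "j \<in> {1..n}" and ij: "i \<noteq> j"
  shows "chi n i j = partial_conj n i (inv\<^bsub>RF n\<^esub> gen n j)"
proof -
  have c: "inv\<^bsub>RF n\<^esub> gen n j \<in> RF_without n i"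
    using i j ij unfolding RF_without_def by (auto intro: generate.inv)
  have cc: "inv\<^bsub>RF n\<^esub> gen n j \<in> carrier (RF n)" using j by simp
  have gens: "partial_conj n i (inv\<^bsub>RF n\<^esub> gen n j) (gen n k) =
      (if k = i then inv\<^bsub>RF n\<^esub> (gen n j) \<otimes>\<^bsub>RF n\<^esub> gen n i \<otimes>\<^bsub>RF n\<^esub> gen n j else gen n k)"
    if "k \<in> {1..n}" for k
    using that j by (simp add: partial_conj_gen[OF cc])
  show ?thesis
    unfolding chi_def
  proof (rule the_equality)
    fix \<phi> assume \<phi>: "\<phi> \<in> auto (RF n) \<and> (\<forall>k\<in>{1..n}. \<phi> (gen n k) =
        (if k = i then inv\<^bsub>RF n\<^esub> (gen n j) \<otimes>\<^bsub>RF n\<^esub> gen n i \<otimes>\<^bsub>RF n\<^esub> gen n j else gen n k))"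
    show "\<phi> = partial_conj n i (inv\<^bsub>RF n\<^esub> gen n j)"
      using \<phi> gens partial_conj_auto[OF c] by (intro RF_auto_eqI) auto
  qed (use partial_conj_auto[OF c] gens in blast)
qed

section \<open>Generators of hP\<Sigma>_n\<close>

abbreviation chi_gens :: "nat \<Rightarrow> (word set \<Rightarrow> word set) set" where
  "chi_gens n \<equiv> (\<lambda>(i, j). chi n i j) ` chi_index n"

lemma chi_gens_in_hPSigma: "chi_gens n \<subseteq> carrier (hPSigma n)"
proof
  fix \<phi> assume "\<phi> \<in> chi_gens n"
  then obtain i j where ij: "i \<in> {1..n}" "j \<in> {1..n}" "i \<noteq> j" "\<phi> = chi n i j"
    by (auto simp: chi_index_def)
  have "inv\<^bsub>RF n\<^esub> gen n j \<in> RF_without n i"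
    using ij unfolding RF_without_def by (auto intro: generate.inv)
  then show "\<phi> \<in> carrier (hPSigma n)"
    using ij by (simp add: chi_eq_partial_conj partial_conj_in_hPSigma)
qed

lemma partial_conj_in_generate_chi:
  assumes i: "i \<in> {1..n}" and c: "c \<in> RF_without n i"
  shows "partial_conj n i c \<in> generate (hPSigma n) (chi_gens n)"
  using c unfolding RF_without_def
proof (induct rule: generate.induct)
  case one
  then show ?case by (simp add: partial_conj_one generate.one flip: one_hPSigma)
next
  case (incl x)
  then obtain j where j: "j \<in> {1..n}" "j \<noteq> i" "x = gen n j" by blast
  have chi: "chi n i j \<in> chi_gens n"
    using i j by (force simp: chi_index_def)
  have x: "x \<in> RF_without n i" and x': "inv\<^bsub>RF n\<^esub> x \<in> RF_without n i"
    using j unfolding RF_without_def by (auto intro: generate.incl generate.inv)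
  have "partial_conj n i x \<otimes>\<^bsub>hPSigma n\<^esub> chi n i j = partial_conj n i \<one>\<^bsub>RF n\<^esub>"
    using i j x x' by (simp add: chi_eq_partial_conj partial_conj_mult)
  then have "inv\<^bsub>hPSigma n\<^esub> chi n i j = partial_conj n i x"
    using subsetD[OF chi_gens_in_hPSigma chi] x
    by (intro hP.inv_equality) (simp_all add: partial_conj_one one_hPSigma partial_conj_in_hPSigma)
  then show ?case using chi by (metis generate.inv)
next
  case (inv x)
  then obtain j where j: "j \<in> {1..n}" "j \<noteq> i" "x = gen n j" by blast
  then have "partial_conj n i (inv\<^bsub>RF n\<^esub> x) = chi n i j"
    using i by (simp add: chi_eq_partial_conj)
  moreover have "chi n i j \<in> chi_gens n"
    using i j by (force simp: chi_index_def)
  ultimately show ?case by (simp add: generate.incl)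
next
  case (eng c d)
  then have "partial_conj n i (c \<otimes>\<^bsub>RF n\<^esub> d) = partial_conj n i d \<otimes>\<^bsub>hPSigma n\<^esub> partial_conj n i c"
    by (simp add: partial_conj_mult RF_without_def)
  then show ?case using eng by (simp add: generate.eng)
qed

lemma RF_without_conjugate_closed:
  assumes k: "k \<in> {1..n}" and l: "l \<in> {1..n}" and h: "h \<in> RF_without n k"
    and s: "s = gen n l \<or> s = inv\<^bsub>RF n\<^esub> gen n l"
  shows "\<exists>h'\<in>RF_without n k. s \<otimes>\<^bsub>RF n\<^esub> (h \<otimes>\<^bsub>RF n\<^esub> gen n k \<otimes>\<^bsub>RF n\<^esub> inv\<^bsub>RF n\<^esub> h) \<otimes>\<^bsub>RF n\<^esub> inv\<^bsub>RF n\<^esub> s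
     = h' \<otimes>\<^bsub>RF n\<^esub> gen n k \<otimes>\<^bsub>RF n\<^esub> inv\<^bsub>RF n\<^esub> h'"
proof (cases "l = k")
  case True
  have "h \<in> carrier (RF n)" using h by (rule RF_without_in_RF)
  then show ?thesis
    using gen_commutes_with_conjugates[OF k] k h s True
    by (auto simp: RF.commutes_with_conjugates_fixes_conjugate)
next
  case False
  then have "s \<in> RF_without n k"
    using l s unfolding RF_without_def by (auto intro: generate.incl generate.inv)
  then have "s \<otimes>\<^bsub>RF n\<^esub> h \<in> RF_without n k"
    using h subgroup.m_closed[OF subgroup_RF_without] by blast
  moreover have "s \<otimes>\<^bsub>RF n\<^esub> (h \<otimes>\<^bsub>RF n\<^esub> gen n k \<otimes>\<^bsub>RF n\<^esub> inv\<^bsub>RF n\<^esub> h) \<otimes>\<^bsub>RF n\<^esub> inv\<^bsub>RF n\<^esub> s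
      = (s \<otimes>\<^bsub>RF n\<^esub> h) \<otimes>\<^bsub>RF n\<^esub> gen n k \<otimes>\<^bsub>RF n\<^esub> inv\<^bsub>RF n\<^esub> (s \<otimes>\<^bsub>RF n\<^esub> h)"
    using k l s RF_without_in_RF[OF h] by (auto simp: RF.m_assoc RF.inv_mult_group)
  ultimately show ?thesis by blast
qed

lemma conj_gen_by_RF_without:
  assumes k: "k \<in> {1..n}" and g: "g \<in> carrier (RF n)"
  shows "\<exists>h\<in>RF_without n k.
     g \<otimes>\<^bsub>RF n\<^esub> gen n k \<otimes>\<^bsub>RF n\<^esub> inv\<^bsub>RF n\<^esub> g = h \<otimes>\<^bsub>RF n\<^esub> gen n k \<otimes>\<^bsub>RF n\<^esub> inv\<^bsub>RF n\<^esub> h"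
proof -
  define C where "C = (\<lambda>h. h \<otimes>\<^bsub>RF n\<^esub> gen n k \<otimes>\<^bsub>RF n\<^esub> inv\<^bsub>RF n\<^esub> h) ` RF_without n k"
  have "g \<otimes>\<^bsub>RF n\<^esub> gen n k \<otimes>\<^bsub>RF n\<^esub> inv\<^bsub>RF n\<^esub> g \<in> C"
  proof (rule RF.generate_conj_closed)
    show "C \<subseteq> carrier (RF n)"
      using k by (auto simp: C_def RF_without_in_RF)
    show "g \<in> generate (RF n) (gen n ` {1..n})"
      using g RF_generate by blast
    show "gen n k \<in> C"
      using k subgroup.one_closed[OF subgroup_RF_without] by (force simp: C_def)
  next
    fix s c assume "s \<in> gen n ` {1..n}" and "c \<in> C"
    then obtain l h where "l \<in> {1..n}" "s = gen n l" "h \<in> RF_without n k"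
      "c = h \<otimes>\<^bsub>RF n\<^esub> gen n k \<otimes>\<^bsub>RF n\<^esub> inv\<^bsub>RF n\<^esub> h"
      by (auto simp: C_def)
    then show "s \<otimes>\<^bsub>RF n\<^esub> c \<otimes>\<^bsub>RF n\<^esub> inv\<^bsub>RF n\<^esub> s \<in> C \<and> inv\<^bsub>RF n\<^esub> s \<otimes>\<^bsub>RF n\<^esub> c \<otimes>\<^bsub>RF n\<^esub> s \<in> C"
      using RF_without_conjugate_closed[OF k] by (fastforce simp: C_def)
  qed auto
  then show ?thesis by (auto simp: C_def)
qed

lemma generate_chi_extend:
  assumes \<phi>: "\<phi> \<in> carrier (hPSigma n)" and k: "k \<in> {1..n}"
    and \<sigma>: "\<sigma> \<in> generate (hPSigma n) (chi_gens n)" and \<sigma>k: "\<sigma> (gen n k) = gen n k"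
  obtains \<tau> where "\<tau> \<in> generate (hPSigma n) (chi_gens n)" "\<tau> (gen n k) = \<phi> (gen n k)"
    "\<And>l. l \<in> {1..n} \<Longrightarrow> l \<noteq> k \<Longrightarrow> \<tau> (gen n l) = \<sigma> (gen n l)"
proof -
  have \<sigma>_hP: "\<sigma> \<in> carrier (hPSigma n)"
    using hP.generate_in_carrier[OF chi_gens_in_hPSigma \<sigma>] .
  then have \<sigma>_auto: "\<sigma> \<in> auto (RF n)" by (rule hPSigma_auto)
  interpret \<sigma>: group_hom "RF n" "RF n" \<sigma> using \<sigma>_auto by (rule RF.auto_group_hom)
  obtain g where g: "g \<in> carrier (RF n)"
    "\<phi> (gen n k) = g \<otimes>\<^bsub>RF n\<^esub> gen n k \<otimes>\<^bsub>RF n\<^esub> inv\<^bsub>RF n\<^esub> g"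
    using \<phi>[unfolded carrier_hPSigma] imageI[OF k, of "gen n"] by (rule RF.conjugating_autosE)
  have "g \<in> \<sigma> ` carrier (RF n)"
    using g(1) auto_surj[OF \<sigma>_auto] by simp
  then obtain h' where h': "h' \<in> carrier (RF n)" "\<sigma> h' = g"
    by (metis imageE)
  obtain h where h: "h \<in> RF_without n k" and hh':
    "h' \<otimes>\<^bsub>RF n\<^esub> gen n k \<otimes>\<^bsub>RF n\<^esub> inv\<^bsub>RF n\<^esub> h' = h \<otimes>\<^bsub>RF n\<^esub> gen n k \<otimes>\<^bsub>RF n\<^esub> inv\<^bsub>RF n\<^esub> h"
    using conj_gen_by_RF_without[OF k h'(1)] by (elim bexE)
  have hc: "h \<in> carrier (RF n)" using h by (rule RF_without_in_RF)
  show thesis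
  proof
    show "\<sigma> \<otimes>\<^bsub>hPSigma n\<^esub> partial_conj n k h \<in> generate (hPSigma n) (chi_gens n)"
      using \<sigma> partial_conj_in_generate_chi[OF k h] by (rule generate.eng)
    have "(\<sigma> \<otimes>\<^bsub>hPSigma n\<^esub> partial_conj n k h) (gen n k)
        = \<sigma> (h' \<otimes>\<^bsub>RF n\<^esub> gen n k \<otimes>\<^bsub>RF n\<^esub> inv\<^bsub>RF n\<^esub> h')"
      using \<sigma>_hP h hc k by (simp add: hPSigma_mult_apply partial_conj_in_hPSigma partial_conj_gen hh')
    also have "\<dots> = \<phi> (gen n k)"
      using h' k g \<sigma>k by simp
    finally show "(\<sigma> \<otimes>\<^bsub>hPSigma n\<^esub> partial_conj n k h) (gen n k) = \<phi> (gen n k)" .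
    fix l assume "l \<in> {1..n}" "l \<noteq> k"
    then show "(\<sigma> \<otimes>\<^bsub>hPSigma n\<^esub> partial_conj n k h) (gen n l) = \<sigma> (gen n l)"
      using \<sigma>_hP h hc by (simp add: hPSigma_mult_apply partial_conj_in_hPSigma partial_conj_gen)
  qed
qed

lemma generate_chi_agrees_below:
  assumes \<phi>: "\<phi> \<in> carrier (hPSigma n)" and m: "m \<le> n"
  obtains \<sigma> where "\<sigma> \<in> generate (hPSigma n) (chi_gens n)"
    "\<And>k. k \<in> {1..n} \<Longrightarrow> \<sigma> (gen n k) = (if k \<le> m then \<phi> (gen n k) else gen n k)"
  using m
proof (induct m arbitrary: thesis)
  case 0
  show ?case
    by (rule 0(1)[OF generate.one]) (simp add: one_hPSigma)
next
  case (Suc m)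
  obtain \<sigma> where \<sigma>: "\<sigma> \<in> generate (hPSigma n) (chi_gens n)"
    and \<sigma>_gen: "\<And>k. k \<in> {1..n} \<Longrightarrow> \<sigma> (gen n k) = (if k \<le> m then \<phi> (gen n k) else gen n k)"
    using Suc.hyps Suc.prems(2) by auto
  have m: "Suc m \<in> {1..n}" using Suc.prems(2) by simp
  obtain \<tau> where \<tau>: "\<tau> \<in> generate (hPSigma n) (chi_gens n)" "\<tau> (gen n (Suc m)) = \<phi> (gen n (Suc m))"
    "\<And>l. l \<in> {1..n} \<Longrightarrow> l \<noteq> Suc m \<Longrightarrow> \<tau> (gen n l) = \<sigma> (gen n l)"
    using generate_chi_extend[OF \<phi> m \<sigma>] \<sigma>_gen[OF m] by auto
  show ?case
    by (rule Suc.prems(1)[OF \<tau>(1)]) (auto simp: \<tau>(2,3) \<sigma>_gen le_Suc_eq)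
qed

lemma hPSigma_in_generate_chi:
  assumes \<phi>: "\<phi> \<in> carrier (hPSigma n)"
  shows "\<phi> \<in> generate (hPSigma n) (chi_gens n)"
proof -
  obtain \<sigma> where \<sigma>: "\<sigma> \<in> generate (hPSigma n) (chi_gens n)"
    and \<sigma>_gen: "\<And>k. k \<in> {1..n} \<Longrightarrow> \<sigma> (gen n k) = (if k \<le> n then \<phi> (gen n k) else gen n k)"
    using generate_chi_agrees_below[OF \<phi> order_refl] by blast
  have "\<sigma> = \<phi>"
  proof (rule RF_auto_eqI)
    show "\<sigma> \<in> auto (RF n)"
      using hP.generate_in_carrier[OF chi_gens_in_hPSigma \<sigma>] by (rule hPSigma_auto)
    show "\<phi> \<in> auto (RF n)"
      using \<phi> by (rule hPSigma_auto)
  qed (simp add: \<sigma>_gen)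
  then show ?thesis using \<sigma> by simp
qed

theorem hPSigma_generated_by_chi: "carrier (hPSigma n) = generate (hPSigma n) (chi_gens n)"
  using hPSigma_in_generate_chi hP.generate_in_carrier[OF chi_gens_in_hPSigma] by blast

section \<open>A Heisenberg-valued invariant\<close>

text \<open>The triple (a, b, c) stands for the matrix [[1, a, c], [0, 1, b], [0, 0, 1]].\<close>

definition heisenberg :: "(int \<times> int \<times> int) monoid" where
  "heisenberg = \<lparr>carrier = UNIV,
     monoid.mult = (\<lambda>(a, b, c) (a', b', c'). (a + a', b + b', c + c' + a * b')), one = (0, 0, 0)\<rparr>"

lemma carrier_heisenberg [simp]: "carrier heisenberg = UNIV"
  and one_heisenberg [simp]: "\<one>\<^bsub>heisenberg\<^esub> = (0, 0, 0)"
  and mult_heisenberg [simp]: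
    "(a, b, c) \<otimes>\<^bsub>heisenberg\<^esub> (a', b', c') = (a + a', b + b', c + c' + a * b')"
  by (simp_all add: heisenberg_def)

lemma group_heisenberg: "group heisenberg"
proof (rule groupI)
  fix x y z :: "int \<times> int \<times> int"
  show "x \<otimes>\<^bsub>heisenberg\<^esub> y \<otimes>\<^bsub>heisenberg\<^esub> z = x \<otimes>\<^bsub>heisenberg\<^esub> (y \<otimes>\<^bsub>heisenberg\<^esub> z)"
    by (cases x; cases y; cases z) (simp add: algebra_simps)
  show "\<one>\<^bsub>heisenberg\<^esub> \<otimes>\<^bsub>heisenberg\<^esub> x = x"
    by (cases x) simp
  obtain a b c where x: "x = (a, b, c)" by (cases x)
  show "\<exists>y\<in>carrier heisenberg. y \<otimes>\<^bsub>heisenberg\<^esub> x = \<one>\<^bsub>heisenberg\<^esub>"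
    unfolding x by (intro bexI[of _ "(- a, - b, a * b - c)"]) (simp_all add: algebra_simps)
qed simp_all

interpretation heis: group heisenberg
  by (rule group_heisenberg)

lemma inv_heisenberg [simp]: "inv\<^bsub>heisenberg\<^esub> (a, b, c) = (- a, - b, a * b - c)"
  by (rule heis.inv_equality) (simp_all add: algebra_simps)

lemma heisenberg_commutes_with_conjugates: "commutes_with_conjugates heisenberg x"
  unfolding commutes_with_conjugates_def
  by (cases x) (auto simp: algebra_simps)

definition heis_gen :: "nat \<Rightarrow> nat \<Rightarrow> nat \<Rightarrow> int \<times> int \<times> int" where
  "heis_gen i j k = (if k = i then (1, 0, 0) else if k = j then (0, 1, 0) else (0, 0, 0))"

definition heis_proj :: "nat \<Rightarrow> nat \<Rightarrow> nat \<Rightarrow> word set \<Rightarrow> int \<times> int \<times> int" where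
  "heis_proj n i j = RF_lift n heisenberg (heis_gen i j)"

interpretation heis_lifting: RF_lifting heisenberg n "heis_gen i j" for n i j
  by unfold_locales (rule heisenberg_commutes_with_conjugates)

lemma heis_proj_hom: "heis_proj n i j \<in> hom (RF n) heisenberg"
  unfolding heis_proj_def by (rule heis_lifting.RF_lift_hom)

lemma heis_proj_gen: "k \<in> {1..n} \<Longrightarrow> heis_proj n i j (gen n k) = heis_gen i j k"
  unfolding heis_proj_def by (rule heis_lifting.RF_lift_gen)

interpretation heis_proj: group_hom "RF n" heisenberg "heis_proj n i j" for n i j
  by (simp add: group_hom_def group_hom_axioms_def RF_group group_heisenberg heis_proj_hom)

abbreviation heis_b :: "int \<times> int \<times> int \<Rightarrow> int" where
  "heis_b x \<equiv> fst (snd x)"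

abbreviation heis_c :: "int \<times> int \<times> int \<Rightarrow> int" where
  "heis_c x \<equiv> snd (snd x)"

lemma heis_b_mult: "heis_b (x \<otimes>\<^bsub>heisenberg\<^esub> y) = heis_b x + heis_b y"
  by (cases x; cases y) simp

lemma heis_b_hom: "heis_b \<in> hom heisenberg integer_group"
  by (rule homI) (simp_all add: heis_b_mult)

lemma heis_c_conj_gen:
  assumes i: "i \<in> {1..n}" and g: "g \<in> carrier (RF n)"
  shows "heis_c (heis_proj n i j (g \<otimes>\<^bsub>RF n\<^esub> gen n i \<otimes>\<^bsub>RF n\<^esub> inv\<^bsub>RF n\<^esub> g)) = - heis_b (heis_proj n i j g)"
proof -
  obtain a b c where abc: "heis_proj n i j g = (a, b, c)" by (cases "heis_proj n i j g")
  show ?thesis using i g by (simp add: abc heis_proj_gen heis_gen_def algebra_simps)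
qed

lemma heis_b_conjugating_auto:
  assumes \<phi>: "\<phi> \<in> carrier (hPSigma n)" and x: "x \<in> carrier (RF n)"
  shows "heis_b (heis_proj n i j (\<phi> x)) = heis_b (heis_proj n i j x)"
  using RF.conjugating_auto_abelian_hom[OF RF_generate \<phi>[unfolded carrier_hPSigma]
      abelian_integer_group hom_compose[OF heis_proj_hom heis_b_hom] x]
  by simp

text \<open>If \<phi> x_i = g x_i g^{-1}, this is minus the x_j-exponent sum of g (\<open>conj_exponent_eq\<close>);
  being read off \<phi> x_i alone, it does not depend on the choice of g.\<close>

definition conj_exponent :: "nat \<Rightarrow> nat \<Rightarrow> nat \<Rightarrow> (word set \<Rightarrow> word set) \<Rightarrow> int" where
  "conj_exponent n i j \<phi> = heis_c (heis_proj n i j (\<phi> (gen n i)))"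

lemma conj_exponent_eq:
  assumes i: "i \<in> {1..n}" and g: "g \<in> carrier (RF n)"
    and \<phi>: "\<phi> (gen n i) = g \<otimes>\<^bsub>RF n\<^esub> gen n i \<otimes>\<^bsub>RF n\<^esub> inv\<^bsub>RF n\<^esub> g"
  shows "conj_exponent n i j \<phi> = - heis_b (heis_proj n i j g)"
  unfolding conj_exponent_def \<phi> by (rule heis_c_conj_gen[OF i g])

lemma conj_exponent_mult:
  assumes \<phi>: "\<phi> \<in> carrier (hPSigma n)" and \<psi>: "\<psi> \<in> carrier (hPSigma n)" and i: "i \<in> {1..n}"
  shows "conj_exponent n i j (\<phi> \<otimes>\<^bsub>hPSigma n\<^esub> \<psi>) = conj_exponent n i j \<phi> + conj_exponent n i j \<psi>"
proof -
  interpret \<phi>: group_hom "RF n" "RF n" \<phi>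
    using \<phi> by (intro RF.auto_group_hom hPSigma_auto)
  obtain g where g: "g \<in> carrier (RF n)" "\<psi> (gen n i) = g \<otimes>\<^bsub>RF n\<^esub> gen n i \<otimes>\<^bsub>RF n\<^esub> inv\<^bsub>RF n\<^esub> g"
    using \<psi>[unfolded carrier_hPSigma] imageI[OF i, of "gen n"] by (rule RF.conjugating_autosE)
  obtain h where h: "h \<in> carrier (RF n)" "\<phi> (gen n i) = h \<otimes>\<^bsub>RF n\<^esub> gen n i \<otimes>\<^bsub>RF n\<^esub> inv\<^bsub>RF n\<^esub> h"
    using \<phi>[unfolded carrier_hPSigma] imageI[OF i, of "gen n"] by (rule RF.conjugating_autosE)
  have "(\<phi> \<otimes>\<^bsub>hPSigma n\<^esub> \<psi>) (gen n i)
      = (\<phi> g \<otimes>\<^bsub>RF n\<^esub> h) \<otimes>\<^bsub>RF n\<^esub> gen n i \<otimes>\<^bsub>RF n\<^esub> inv\<^bsub>RF n\<^esub> (\<phi> g \<otimes>\<^bsub>RF n\<^esub> h)"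
    using \<phi> \<psi> g h i by (simp add: hPSigma_mult_apply RF.m_assoc RF.inv_mult_group)
  then have "conj_exponent n i j (\<phi> \<otimes>\<^bsub>hPSigma n\<^esub> \<psi>) = - heis_b (heis_proj n i j (\<phi> g \<otimes>\<^bsub>RF n\<^esub> h))"
    using g h by (intro conj_exponent_eq[OF i]) simp_all
  also have "\<dots> = - heis_b (heis_proj n i j g) - heis_b (heis_proj n i j h)"
    using \<phi> g h by (simp add: heis_b_mult heis_b_conjugating_auto)
  also have "\<dots> = conj_exponent n i j \<phi> + conj_exponent n i j \<psi>"
    using g h by (simp add: conj_exponent_eq[OF i])
  finally show ?thesis .
qed

lemma conj_exponent_chi:
  assumes i: "i \<in> {1..n}" and j: "j \<in> {1..n}" and kl: "(k, l) \<in> chi_index n"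
  shows "conj_exponent n i j (chi n k l) = (if (k, l) = (i, j) then 1 else 0)"
proof -
  have k: "k \<in> {1..n}" and l: "l \<in> {1..n}" and "k \<noteq> l"
    using kl by (auto simp: chi_index_def)
  define g where "g = (if i = k then inv\<^bsub>RF n\<^esub> gen n l else \<one>\<^bsub>RF n\<^esub>)"
  have g: "g \<in> carrier (RF n)" using l by (simp add: g_def)
  have "chi n k l (gen n i) = g \<otimes>\<^bsub>RF n\<^esub> gen n i \<otimes>\<^bsub>RF n\<^esub> inv\<^bsub>RF n\<^esub> g"
    using i k l \<open>k \<noteq> l\<close> by (simp add: g_def chi_eq_partial_conj partial_conj_gen)
  then have "conj_exponent n i j (chi n k l) = - heis_b (heis_proj n i j g)"
    by (rule conj_exponent_eq[OF i g])
  then show ?thesis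
    using l \<open>k \<noteq> l\<close> by (simp add: g_def heis_proj_gen heis_gen_def)
qed

section \<open>The abelianization of hP\<Sigma>_n\<close>

definition chi_coords :: "nat \<Rightarrow> (word set \<Rightarrow> word set) \<Rightarrow> (nat \<times> nat \<Rightarrow>\<^sub>0 int)" where
  "chi_coords n \<phi> = (\<Sum>a\<in>chi_index n. frag_cmul (conj_exponent n (fst a) (snd a) \<phi>) (frag_of a))"

lemma finite_chi_index: "finite (chi_index n)"
  by (rule finite_subset[of _ "{1..n} \<times> {1..n}"]) (auto simp: chi_index_def)

lemma chi_coords_hom: "chi_coords n \<in> hom (hPSigma n) (free_Abelian_group (chi_index n))"
proof (rule homI)
  fix \<phi> show "chi_coords n \<phi> \<in> carrier (free_Abelian_group (chi_index n))"
    unfolding chi_coords_def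
    by (rule sum_closed_free_Abelian_group) (auto dest: subsetD[OF keys_cmul])
next
  fix \<phi> \<psi> assume \<phi>: "\<phi> \<in> carrier (hPSigma n)" and \<psi>: "\<psi> \<in> carrier (hPSigma n)"
  have "chi_coords n (\<phi> \<otimes>\<^bsub>hPSigma n\<^esub> \<psi>) = (\<Sum>a\<in>chi_index n.
      frag_cmul (conj_exponent n (fst a) (snd a) \<phi>) (frag_of a) +
      frag_cmul (conj_exponent n (fst a) (snd a) \<psi>) (frag_of a))"
    unfolding chi_coords_def
  proof (rule sum.cong[OF refl])
    fix a assume "a \<in> chi_index n"
    then have "fst a \<in> {1..n}" by (auto simp: chi_index_def)
    then show "frag_cmul (conj_exponent n (fst a) (snd a) (\<phi> \<otimes>\<^bsub>hPSigma n\<^esub> \<psi>)) (frag_of a) =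
        frag_cmul (conj_exponent n (fst a) (snd a) \<phi>) (frag_of a) +
        frag_cmul (conj_exponent n (fst a) (snd a) \<psi>) (frag_of a)"
      using \<phi> \<psi> by (simp add: conj_exponent_mult frag_cmul_distrib)
  qed
  then show "chi_coords n (\<phi> \<otimes>\<^bsub>hPSigma n\<^esub> \<psi>)
      = chi_coords n \<phi> \<otimes>\<^bsub>free_Abelian_group (chi_index n)\<^esub> chi_coords n \<psi>"
    by (simp add: chi_coords_def sum.distrib)
qed

lemma chi_coords_chi:
  assumes kl: "(k, l) \<in> chi_index n"
  shows "chi_coords n (chi n k l) = frag_of (k, l)"
proof -
  have "chi_coords n (chi n k l) = (\<Sum>a\<in>chi_index n. if a = (k, l) then frag_of a else 0)"
    unfolding chi_coords_def
  proof (rule sum.cong[OF refl])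
    fix a assume "a \<in> chi_index n"
    then show "frag_cmul (conj_exponent n (fst a) (snd a) (chi n k l)) (frag_of a)
        = (if a = (k, l) then frag_of a else 0)"
      using kl by (auto simp: chi_index_def conj_exponent_chi)
  qed
  also have "\<dots> = frag_of (k, l)"
    using kl finite_chi_index by (simp add: sum.delta')
  finally show ?thesis .
qed

theorem corollary3p10:
  fixes n :: nat
  assumes "n \<ge> 2"
  shows "carrier (hPSigma n) = generate (hPSigma n) ((\<lambda>(i, j). chi n i j) ` chi_index n)
       \<and> (\<exists>\<psi>. \<psi> \<in> iso (free_Abelian_group (chi_index n)) (abelianization (hPSigma n))
              \<and> (\<forall>(i, j) \<in> chi_index n.
                   \<psi> (frag_of (i, j)) = derived (hPSigma n) (carrier (hPSigma n)) #>\<^bsub>hPSigma n\<^esub> chi n i j))"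
proof -
  have gen: "carrier (hPSigma n) = generate (hPSigma n) (chi_gens n)"
    by (rule hPSigma_generated_by_chi)
  then have "carrier (hPSigma n) = generate (hPSigma n) ((\<lambda>a. chi n (fst a) (snd a)) ` chi_index n)"
    by (simp add: case_prod_beta')
  then obtain \<psi> where "\<psi> \<in> iso (free_Abelian_group (chi_index n)) (abelianization (hPSigma n))"
    "\<And>a. a \<in> chi_index n \<Longrightarrow> \<psi> (frag_of a) =
       derived (hPSigma n) (carrier (hPSigma n)) #>\<^bsub>hPSigma n\<^esub> chi n (fst a) (snd a)"
    by (rule hP.abelianization_iso_free_Abelian_group[OF _ chi_coords_hom])
       (auto simp: chi_coords_chi abelianization_def)
  with gen show ?thesis by auto
qed

end
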